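(* Let $(\mathcal{F},w,s)$ be a balanced system on $n$ elements, with $\mathcal{F}=(F_1,\dots,F_m)$, and let $G=(V,E)$ be a directed graph. Let $f$ be the partitioning produced by the BISP algorithm with this system: (i) for every vertex $v$ choose $l(v)\in[m]$ independently with $\mathbb{P}(l(v)=i)=w_i$; (ii) for every edge $(v,u)\in E$ choose $f(v,u)\in[n]$ independently with $\mathbb{P}(f(v,u)=p)=s_{l(v)l(u)p}$. Suppose $|V|\to\infty$, $|E|/|V|\to\infty$ and $n=o\big((|E|/|V|)^{1/2}\big)$. Then for every $\varepsilon>0$, $\mathbb{P}(\mathrm{ib}(f)\le 1+\varepsilon)\to1$.
   Context: A system on $n$ elements is a triple $(\mathcal{F},w,s)$ where $\mathcal{F}=(F_1,\dots,F_m)$ is a collection of subsets of $[n]$, $w\in[0,1]^m$ with $\sum_i w_i=1$, and $s\in[0,1]^{m\times m\times n}$ with $\sum_p s_{ijp}=1$ for all $i,j$. It is balanced if for all $p\in[n]$, $\sum_{i=1}^m\sum_{j=1}^m w_iw_js_{ijp}=1/n$. A graph partitioning of $G=(V,E)$ into the $n$ partitions $[n]$ is a function $f:E\to[n]$; its imbalance is $\mathrm{ib}(f)=\dfrac{\max_{l\in[n]}|\{e\in E: f(e)=l\}|}{|E|/n}$. *)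

theory Defs
  imports "HOL-Analysis.Analysis" "HOL-Library.Landau_Symbols"
begin

text \<open>A system on n elements, 0-indexed: elements {..<n}, sets F 0 .. F (m-1),
  weights w i (i < m), distributions s i j p (i, j < m, p < n).\<close>
definition is_system :: "nat \<Rightarrow> nat \<Rightarrow> (nat \<Rightarrow> nat set) \<Rightarrow> (nat \<Rightarrow> real)
    \<Rightarrow> (nat \<Rightarrow> nat \<Rightarrow> nat \<Rightarrow> real) \<Rightarrow> bool" where
  "is_system n m F w s \<longleftrightarrow>
     (\<forall>i<m. F i \<subseteq> {..<n}) \<and>
     (\<forall>i<m. 0 \<le> w i \<and> w i \<le> 1) \<and> (\<Sum>i<m. w i) = 1 \<and>
     (\<forall>i<m. \<forall>j<m. \<forall>p<n. 0 \<le> s i j p \<and> s i j p \<le> 1) \<and>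
     (\<forall>i<m. \<forall>j<m. (\<Sum>p<n. s i j p) = 1)"

definition is_balanced :: "nat \<Rightarrow> nat \<Rightarrow> (nat \<Rightarrow> real)
    \<Rightarrow> (nat \<Rightarrow> nat \<Rightarrow> nat \<Rightarrow> real) \<Rightarrow> bool" where
  "is_balanced n m w s \<longleftrightarrow>
     (\<forall>p<n. (\<Sum>i<m. \<Sum>j<m. w i * w j * s i j p) = 1 / real n)"

definition imbalance :: "nat \<Rightarrow> ('v \<times> 'v) set \<Rightarrow> ('v \<times> 'v \<Rightarrow> nat) \<Rightarrow> real" where
  "imbalance n E f =
     real (Max ((\<lambda>l. card {e\<in>E. f e = l}) ` {..<n})) / (real (card E) / real n)"

text \<open>Probability that the partitioning produced by BISP (labels l(v) chosen independently
  with P(l v = i) = w i; then f(v,u) chosen independently with P(f(v,u) = p) = s (l v) (l u) p)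
  satisfies the predicate P. Written as the explicit finite sum over all outcomes.\<close>
definition bisp_prob :: "nat \<Rightarrow> nat \<Rightarrow> (nat \<Rightarrow> real) \<Rightarrow> (nat \<Rightarrow> nat \<Rightarrow> nat \<Rightarrow> real)
    \<Rightarrow> 'v set \<Rightarrow> ('v \<times> 'v) set \<Rightarrow> (('v \<times> 'v \<Rightarrow> nat) \<Rightarrow> bool) \<Rightarrow> real" where
  "bisp_prob n m w s V E P =
     (\<Sum>l\<in>PiE V (\<lambda>_. {..<m}). \<Sum>f\<in>PiE E (\<lambda>_. {..<n}).
        (if P f then 1 else 0) * (\<Prod>v\<in>V. w (l v)) *
        (\<Prod>e\<in>E. s (l (fst e)) (l (snd e)) (f e)))"

end

theory Submission
  imports Defs
begin

text \<open>
  Second moment method. Let \<open>X\<^sub>p\<close> be the number of edges in part \<open>p\<close> and \<open>c = |E|/n\<close>.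
  Then \<open>\<Sum>\<^sub>p (X\<^sub>p - c)\<^sup>2 = #{(e, e'). f e = f e'} - |E|\<^sup>2/n\<close>, and an imbalance
  above \<open>1 + \<epsilon>\<close> forces this quantity to be at least \<open>(\<epsilon> c)\<^sup>2\<close>. For edges
  \<open>e, e'\<close> with four distinct endpoints the four endpoint labels are independent, so
  balancedness gives \<open>P(f e = f e') = \<Sum>\<^sub>p (1/n)\<^sup>2 = 1/n\<close> exactly; each of the at most
  \<open>6 |V| |E|\<close> remaining pairs contributes at most 1. Hence the quantity has expectation at
  most \<open>6 |V| |E|\<close>, and Markov's inequality bounds the failure probability by
  \<open>6 n\<^sup>2 / (\<epsilon>\<^sup>2 |E|/|V|) \<longrightarrow> 0\<close>.
\<close>

section \<open>Product weights on finite function spaces\<close>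

lemma sum_PiE_prod_weight_remove:
  fixes g :: "'a \<Rightarrow> 'b \<Rightarrow> real"
  assumes "finite A" "a \<in> A"
  shows "(\<Sum>f\<in>PiE A (\<lambda>_. B). (\<Prod>x\<in>A. g x (f x)) * H f)
       = (\<Sum>y\<in>B. g a y * (\<Sum>f\<in>PiE (A - {a}) (\<lambda>_. B). (\<Prod>x\<in>A - {a}. g x (f x)) * H (f(a := y))))"
proof -
  define A' where "A' = A - {a}"
  have A': "A = insert a A'" "a \<notin> A'" "finite A'"
    using assms by (auto simp: A'_def)
  have "(\<Sum>f\<in>PiE A (\<lambda>_. B). (\<Prod>x\<in>A. g x (f x)) * H f)
      = (\<Sum>(y, f)\<in>B \<times> PiE A' (\<lambda>_. B). (\<Prod>x\<in>insert a A'. g x ((f(a := y)) x)) * H (f(a := y)))"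
    unfolding A'(1) PiE_insert_eq
    by (subst sum.reindex) (auto intro!: inj_combinator A' simp: case_prod_beta)
  also have "\<dots> = (\<Sum>(y, f)\<in>B \<times> PiE A' (\<lambda>_. B). g a y * ((\<Prod>x\<in>A'. g x (f x)) * H (f(a := y))))"
  proof (intro sum.cong refl, clarify)
    fix y f
    have "(\<Prod>x\<in>A'. g x ((f(a := y)) x)) = (\<Prod>x\<in>A'. g x (f x))"
      using A' by (intro prod.cong) auto
    then show "(\<Prod>x\<in>insert a A'. g x ((f(a := y)) x)) * H (f(a := y))
        = g a y * ((\<Prod>x\<in>A'. g x (f x)) * H (f(a := y)))"
      using A' by simp
  qed
  finally show ?thesis
    by (simp add: A'_def sum.cartesian_product[symmetric] sum_distrib_left)
qed

lemma sum_PiE_prod_weight_const: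
  fixes g :: "'a \<Rightarrow> 'b \<Rightarrow> real"
  assumes "finite A" "finite B" "\<And>x. x \<in> A \<Longrightarrow> (\<Sum>y\<in>B. g x y) = 1"
  shows "(\<Sum>f\<in>PiE A (\<lambda>_. B). (\<Prod>x\<in>A. g x (f x)) * c) = c"
proof -
  have "(\<Sum>f\<in>PiE A (\<lambda>_. B). \<Prod>x\<in>A. g x (f x)) = (\<Prod>x\<in>A. \<Sum>y\<in>B. g x y)"
    using assms(1,2) by (intro prod_sum_PiE[symmetric]) auto
  also have "\<dots> = 1"
    using assms(3) by simp
  finally show ?thesis
    by (simp add: sum_distrib_right[symmetric])
qed

lemma sum_PiE_prod_weight_two_points:
  fixes g :: "'a \<Rightarrow> 'b \<Rightarrow> real"
  assumes "finite A" "finite B" "\<And>x. x \<in> A \<Longrightarrow> (\<Sum>y\<in>B. g x y) = 1"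
    and "a \<in> A" "b \<in> A" "a \<noteq> b"
  shows "(\<Sum>f\<in>PiE A (\<lambda>_. B). (\<Prod>x\<in>A. g x (f x)) * h (f a) (f b))
       = (\<Sum>y\<in>B. \<Sum>z\<in>B. g a y * g b z * h y z)"
proof -
  have "(\<Sum>f\<in>PiE A (\<lambda>_. B). (\<Prod>x\<in>A. g x (f x)) * h (f a) (f b))
      = (\<Sum>y\<in>B. g a y * (\<Sum>f\<in>PiE (A - {a}) (\<lambda>_. B). (\<Prod>x\<in>A - {a}. g x (f x)) * h y (f b)))"
    using assms by (subst sum_PiE_prod_weight_remove[of A a]) auto
  also have "\<dots> = (\<Sum>y\<in>B. g a y * (\<Sum>z\<in>B. g b z *
      (\<Sum>f\<in>PiE (A - {a} - {b}) (\<lambda>_. B). (\<Prod>x\<in>A - {a} - {b}. g x (f x)) * h y z)))"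
    using assms by (subst sum_PiE_prod_weight_remove[of "A - {a}" b]) auto
  also have "\<dots> = (\<Sum>y\<in>B. g a y * (\<Sum>z\<in>B. g b z * h y z))"
    using assms by (subst sum_PiE_prod_weight_const) auto
  also have "\<dots> = (\<Sum>y\<in>B. \<Sum>z\<in>B. g a y * g b z * h y z)"
    by (simp add: sum_distrib_left mult.assoc)
  finally show ?thesis .
qed

lemma sum_PiE_prod_weight_four_points:
  fixes g :: "'a \<Rightarrow> 'b \<Rightarrow> real"
  assumes "finite A" "finite B" "\<And>x. x \<in> A \<Longrightarrow> (\<Sum>y\<in>B. g x y) = 1"
    and "a \<in> A" "b \<in> A" "c \<in> A" "d \<in> A" "distinct [a, b, c, d]"
  shows "(\<Sum>f\<in>PiE A (\<lambda>_. B). (\<Prod>x\<in>A. g x (f x)) * h (f a) (f b) (f c) (f d))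
       = (\<Sum>y\<in>B. \<Sum>z\<in>B. \<Sum>y'\<in>B. \<Sum>z'\<in>B. g a y * g b z * g c y' * g d z' * h y z y' z')"
proof -
  have "(\<Sum>f\<in>PiE A (\<lambda>_. B). (\<Prod>x\<in>A. g x (f x)) * h (f a) (f b) (f c) (f d))
      = (\<Sum>y\<in>B. g a y *
          (\<Sum>f\<in>PiE (A - {a}) (\<lambda>_. B). (\<Prod>x\<in>A - {a}. g x (f x)) * h y (f b) (f c) (f d)))"
    using assms by (subst sum_PiE_prod_weight_remove[of A a]) auto
  also have "\<dots> = (\<Sum>y\<in>B. g a y * (\<Sum>z\<in>B. g b z * (\<Sum>f\<in>PiE (A - {a} - {b}) (\<lambda>_. B).
           (\<Prod>x\<in>A - {a} - {b}. g x (f x)) * h y z (f c) (f d))))"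
    using assms by (subst sum_PiE_prod_weight_remove[of "A - {a}" b]) auto
  also have "\<dots> = (\<Sum>y\<in>B. g a y * (\<Sum>z\<in>B. g b z *
      (\<Sum>y'\<in>B. \<Sum>z'\<in>B. g c y' * g d z' * h y z y' z')))"
    using assms by (subst sum_PiE_prod_weight_two_points[of "A - {a} - {b}" B g c d]) auto
  also have "\<dots> = (\<Sum>y\<in>B. \<Sum>z\<in>B. \<Sum>y'\<in>B. \<Sum>z'\<in>B. g a y * g b z * g c y' * g d z' * h y z y' z')"
    by (simp add: sum_distrib_left mult_ac)
  finally show ?thesis .
qed

lemma sum_quadruple_weights_eq_sum_sq:
  fixes w :: "nat \<Rightarrow> real" and s :: "nat \<Rightarrow> nat \<Rightarrow> nat \<Rightarrow> real"
  shows "(\<Sum>i<m. \<Sum>j<m. \<Sum>i'<m. \<Sum>j'<m. w i * w j * w i' * w j' * (\<Sum>p<n. s i j p * s i' j' p))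
    = (\<Sum>p<n. (\<Sum>i<m. \<Sum>j<m. w i * w j * s i j p)\<^sup>2)"
  unfolding power2_eq_square sum_distrib_right
  by (simp add: sum_distrib_left sum.swap[of _ "{..<n}"] mult_ac)

section \<open>Part sizes and dependent pairs of edges\<close>

lemma sum_sq_part_size_deviation:
  fixes f :: "'e \<Rightarrow> nat"
  assumes "finite E" "\<And>e. e \<in> E \<Longrightarrow> f e < n" "0 < n"
  shows "(\<Sum>p<n. (real (card {e\<in>E. f e = p}) - real (card E) / real n)\<^sup>2)
       = (\<Sum>e\<in>E. \<Sum>e'\<in>E. of_bool (f e = f e')) - (real (card E))\<^sup>2 / real n"
proof -
  define X where "X p = (\<Sum>e\<in>E. of_bool (f e = p) :: real)" for p
  have card_part: "real (card {e\<in>E. f e = p}) = X p" for p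
    using assms(1) by (simp add: X_def Int_def conj_commute)
  have select: "(\<Sum>p<n. of_bool (f e = p) * g p) = g (f e)" if "e \<in> E" for e and g :: "nat \<Rightarrow> real"
  proof -
    have "(\<Sum>p<n. of_bool (f e = p) * g p) = (\<Sum>p<n. if f e = p then g p else 0)"
      by (intro sum.cong) auto
    then show ?thesis
      using assms(2)[OF that] by simp
  qed
  have sum_X: "(\<Sum>p<n. X p) = real (card E)"
  proof -
    have "(\<Sum>p<n. X p) = (\<Sum>e\<in>E. \<Sum>p<n. of_bool (f e = p) * 1)"
      unfolding X_def by (simp only: mult_1_right) (rule sum.swap)
    also have "\<dots> = (\<Sum>e\<in>E. 1)"
      by (intro sum.cong refl select)
    finally show ?thesis
      by simp
  qed
  have sum_X_sq: "(\<Sum>p<n. (X p)\<^sup>2) = (\<Sum>e\<in>E. \<Sum>e'\<in>E. of_bool (f e = f e'))"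
  proof -
    have "(\<Sum>p<n. (X p)\<^sup>2) = (\<Sum>p<n. \<Sum>e\<in>E. \<Sum>e'\<in>E. of_bool (f e = p) * of_bool (f e' = p))"
      unfolding X_def power2_eq_square by (simp only: sum_product)
    also have "\<dots> = (\<Sum>e\<in>E. \<Sum>e'\<in>E. \<Sum>p<n. of_bool (f e = p) * of_bool (f e' = p))"
      by (subst sum.swap) (intro sum.cong refl sum.swap)
    also have "\<dots> = (\<Sum>e\<in>E. \<Sum>e'\<in>E. of_bool (f e' = f e))"
      by (intro sum.cong refl select)
    finally show ?thesis
      by (simp only: eq_commute)
  qed
  have "(\<Sum>p<n. (X p - real (card E) / real n)\<^sup>2)
      = (\<Sum>p<n. (X p)\<^sup>2) - 2 * (real (card E) / real n) * (\<Sum>p<n. X p) + real n * (real (card E) / real n)\<^sup>2"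
    by (simp add: power2_diff sum_subtractf sum.distrib sum_distrib_left sum_divide_distrib[symmetric] mult_ac)
  also have "\<dots> = (\<Sum>e\<in>E. \<Sum>e'\<in>E. of_bool (f e = f e')) - (real (card E))\<^sup>2 / real n"
    unfolding sum_X sum_X_sq using assms(3) by (simp add: power2_eq_square field_simps)
  finally show ?thesis
    by (simp add: card_part)
qed

lemma sq_deviation_ge_if_imbalance_gt:
  assumes "0 \<le> \<epsilon>" "1 + \<epsilon> < imbalance n E f"
  shows "(\<epsilon> * (real (card E) / real n))\<^sup>2
       \<le> (\<Sum>p<n. (real (card {e\<in>E. f e = p}) - real (card E) / real n)\<^sup>2)"
proof -
  define c where "c = real (card E) / real n"
  define M where "M = Max ((\<lambda>p. card {e\<in>E. f e = p}) ` {..<n})"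
  have imb: "imbalance n E f = real M / c"
    by (simp add: imbalance_def M_def c_def)
  have "c \<noteq> 0"
    using assms imb by auto
  then have "0 < c" "0 < n"
    by (auto simp: c_def)
  then have "M \<in> (\<lambda>p. card {e\<in>E. f e = p}) ` {..<n}"
    unfolding M_def by (intro Max_in) auto
  then obtain p where p: "p < n" "M = card {e\<in>E. f e = p}"
    by auto
  have "(1 + \<epsilon>) * c < real M"
    using assms(2) \<open>0 < c\<close> by (simp add: imb pos_less_divide_eq)
  then have "\<epsilon> * c \<le> real (card {e\<in>E. f e = p}) - c"
    using p by (simp add: algebra_simps)
  then have "(\<epsilon> * c)\<^sup>2 \<le> (real (card {e\<in>E. f e = p}) - c)\<^sup>2"
    using assms(1) \<open>0 < c\<close> by (intro power_mono) auto
  also have "\<dots> \<le> (\<Sum>p<n. (real (card {e\<in>E. f e = p}) - c)\<^sup>2)"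
    using p by (intro member_le_sum) auto
  finally show ?thesis
    by (simp add: c_def)
qed

lemma card_incident_edges_le:
  assumes "finite V" "E \<subseteq> V \<times> V"
  shows "card {e\<in>E. fst e = a} \<le> card V" "card {e\<in>E. snd e = a} \<le> card V"
    and "card {e\<in>E. fst e = snd e} \<le> card V"
  using assms by (intro card_inj_on_le[of snd] card_inj_on_le[of fst];
      auto simp: inj_on_def prod_eq_iff)+

lemma of_bool_not_distinct4_le:
  "(of_bool (\<not> distinct [a, b, c, d]) :: real)
     \<le> of_bool (a = b) + of_bool (c = a) + of_bool (d = a) + of_bool (c = b) + of_bool (d = b) + of_bool (c = d)"
  by (cases "a = b"; cases "c = a"; cases "d = a"; cases "c = b"; cases "d = b"; cases "c = d") auto

definition dependent_edges :: "'v \<times> 'v \<Rightarrow> 'v \<times> 'v \<Rightarrow> bool" where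
  "dependent_edges e e' \<longleftrightarrow> \<not> distinct [fst e, snd e, fst e', snd e']"

lemma sum_dependent_edges_le:
  assumes "finite V" "E \<subseteq> V \<times> V"
  shows "(\<Sum>e\<in>E. \<Sum>e'\<in>E. of_bool (dependent_edges e e'))
       \<le> 6 * real (card V) * real (card E)"
proof -
  have "finite E"
    using assms finite_subset by blast
  let ?deg = "\<lambda>P. real (card {e'\<in>E. P e'})"
  have row: "(\<Sum>e'\<in>E. of_bool (dependent_edges e e') :: real)
      \<le> real (card E) * of_bool (fst e = snd e) + 5 * real (card V)" for e
  proof -
    have "(\<Sum>e'\<in>E. of_bool (dependent_edges e e') :: real)
        \<le> (\<Sum>e'\<in>E. of_bool (fst e = snd e) + of_bool (fst e' = fst e) + of_bool (snd e' = fst e)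
            + of_bool (fst e' = snd e) + of_bool (snd e' = snd e) + of_bool (fst e' = snd e'))"
      unfolding dependent_edges_def by (intro sum_mono of_bool_not_distinct4_le)
    also have "\<dots> = real (card E) * of_bool (fst e = snd e) + ?deg (\<lambda>e'. fst e' = fst e)
        + ?deg (\<lambda>e'. snd e' = fst e) + ?deg (\<lambda>e'. fst e' = snd e) + ?deg (\<lambda>e'. snd e' = snd e)
        + ?deg (\<lambda>e'. fst e' = snd e')"
      using \<open>finite E\<close> by (simp add: sum.distrib Int_def conj_commute)
    also have "\<dots> \<le> real (card E) * of_bool (fst e = snd e) + 5 * real (card V)"
      using card_incident_edges_le(1,2)[OF assms, of "fst e"]
        card_incident_edges_le(1,2)[OF assms, of "snd e"] card_incident_edges_le(3)[OF assms]
      by linarith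
    finally show ?thesis .
  qed
  have "(\<Sum>e\<in>E. \<Sum>e'\<in>E. of_bool (dependent_edges e e'))
      \<le> (\<Sum>e\<in>E. real (card E) * of_bool (fst e = snd e) + 5 * real (card V))"
    by (intro sum_mono row)
  also have "\<dots> = real (card E) * ?deg (\<lambda>e. fst e = snd e) + 5 * real (card V) * real (card E)"
    using \<open>finite E\<close> by (simp add: sum.distrib sum_distrib_left[symmetric] Int_def conj_commute)
  also have "\<dots> \<le> real (card E) * real (card V) + 5 * real (card V) * real (card E)"
    using card_incident_edges_le(3)[OF assms] by (intro add_right_mono mult_left_mono) auto
  also have "\<dots> = 6 * real (card V) * real (card E)"
    by simp
  finally show ?thesis .
qed

section \<open>Expectations under BISP\<close>

definition bisp_expectation :: "nat \<Rightarrow> nat \<Rightarrow> (nat \<Rightarrow> real) \<Rightarrow> (nat \<Rightarrow> nat \<Rightarrow> nat \<Rightarrow> real)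
    \<Rightarrow> 'v set \<Rightarrow> ('v \<times> 'v) set \<Rightarrow> (('v \<Rightarrow> nat) \<Rightarrow> ('v \<times> 'v \<Rightarrow> nat) \<Rightarrow> real) \<Rightarrow> real" where
  "bisp_expectation n m w s V E X =
     (\<Sum>l\<in>PiE V (\<lambda>_. {..<m}). (\<Prod>v\<in>V. w (l v)) *
        (\<Sum>f\<in>PiE E (\<lambda>_. {..<n}). (\<Prod>e\<in>E. s (l (fst e)) (l (snd e)) (f e)) * X l f))"

lemma bisp_prob_eq_expectation:
  "bisp_prob n m w s V E P = bisp_expectation n m w s V E (\<lambda>_ f. of_bool (P f))"
  unfolding bisp_prob_def bisp_expectation_def by (simp add: sum_distrib_left of_bool_def mult_ac)

locale bisp_system =
  fixes n m :: nat and F :: "nat \<Rightarrow> nat set" and w :: "nat \<Rightarrow> real"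
    and s :: "nat \<Rightarrow> nat \<Rightarrow> nat \<Rightarrow> real" and V :: "'v set" and E :: "('v \<times> 'v) set"
  assumes system: "is_system n m F w s" and finite_V: "finite V" and edges: "E \<subseteq> V \<times> V"
begin

abbreviation expect :: "(('v \<Rightarrow> nat) \<Rightarrow> ('v \<times> 'v \<Rightarrow> nat) \<Rightarrow> real) \<Rightarrow> real" where
  "expect \<equiv> bisp_expectation n m w s V E"

abbreviation labellings :: "('v \<Rightarrow> nat) set" where
  "labellings \<equiv> PiE V (\<lambda>_. {..<m})"

abbreviation partitionings :: "('v \<times> 'v \<Rightarrow> nat) set" where
  "partitionings \<equiv> PiE E (\<lambda>_. {..<n})"

lemma finite_E: "finite E"
  using edges finite_V by (meson finite_SigmaI finite_subset)

lemma n_pos: "0 < n"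
proof -
  have "0 < m"
    using system by (cases m) (auto simp: is_system_def)
  then show ?thesis
    using system by (cases n) (auto simp: is_system_def)
qed

lemma edge_labels_less:
  assumes "l \<in> labellings" "e \<in> E"
  shows "l (fst e) < m" "l (snd e) < m"
  using assms edges by (auto simp: PiE_def Pi_def)

lemma label_weights_sum: "(\<Sum>i<m. w i) = 1"
  using system by (simp add: is_system_def)

lemma part_weights_sum: "i < m \<Longrightarrow> j < m \<Longrightarrow> (\<Sum>p<n. s i j p) = 1"
  using system by (simp add: is_system_def)

lemma expect_const: "expect (\<lambda>_ _. c) = c"
proof -
  have "(\<Sum>f\<in>partitionings. (\<Prod>e\<in>E. s (l (fst e)) (l (snd e)) (f e)) * c) = c"
    if "l \<in> labellings" for l
    using that finite_E by (intro sum_PiE_prod_weight_const) (auto simp: part_weights_sum edge_labels_less)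
  then have "expect (\<lambda>_ _. c) = (\<Sum>l\<in>labellings. (\<Prod>v\<in>V. w (l v)) * c)"
    unfolding bisp_expectation_def by (intro sum.cong) auto
  also have "\<dots> = c"
    using finite_V by (intro sum_PiE_prod_weight_const) (auto simp: label_weights_sum)
  finally show ?thesis .
qed

lemma expect_diff: "expect (\<lambda>l f. X l f - Y l f) = expect X - expect Y"
  unfolding bisp_expectation_def by (simp add: algebra_simps sum_subtractf)

lemma expect_scale: "expect (\<lambda>l f. c * X l f) = c * expect X"
  unfolding bisp_expectation_def by (simp add: sum_distrib_left mult_ac)

lemma expect_sum: "expect (\<lambda>l f. \<Sum>i\<in>I. X i l f) = (\<Sum>i\<in>I. expect (X i))"
  unfolding bisp_expectation_def
  by (simp add: sum_distrib_left sum.swap[of _ I])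

lemma expect_mono:
  assumes "\<And>l f. l \<in> labellings \<Longrightarrow> f \<in> partitionings \<Longrightarrow> X l f \<le> Y l f"
  shows "expect X \<le> expect Y"
  unfolding bisp_expectation_def
proof (intro sum_mono mult_left_mono prod_nonneg)
  fix l v assume "l \<in> labellings" "v \<in> V"
  then show "0 \<le> w (l v)"
    using system by (auto simp: is_system_def)
next
  fix l f e assume "l \<in> labellings" "f \<in> partitionings" "e \<in> E"
  moreover have "f e < n"
    using PiE_mem[OF \<open>f \<in> partitionings\<close> \<open>e \<in> E\<close>] by simp
  ultimately show "0 \<le> s (l (fst e)) (l (snd e)) (f e)"
    using system edge_labels_less by (simp add: is_system_def)
qed (use assms in auto)

lemma expect_cong:
  assumes "\<And>l f. l \<in> labellings \<Longrightarrow> f \<in> partitionings \<Longrightarrow> X l f = Y l f"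
  shows "expect X = expect Y"
  using expect_mono[of X Y] expect_mono[of Y X] assms by force

lemma expect_same_part_if_not_dependent:
  assumes "is_balanced n m w s" "e \<in> E" "e' \<in> E" "\<not> dependent_edges e e'"
  shows "expect (\<lambda>_ f. of_bool (f e = f e')) = 1 / real n"
proof -
  have distinct: "distinct [fst e, snd e, fst e', snd e']"
    using assms(4) by (simp add: dependent_edges_def)
  then have "e \<noteq> e'"
    by auto
  have edge_marginal: "(\<Sum>f\<in>partitionings. (\<Prod>x\<in>E. s (l (fst x)) (l (snd x)) (f x)) * of_bool (f e = f e'))
      = (\<Sum>p<n. s (l (fst e)) (l (snd e)) p * s (l (fst e')) (l (snd e')) p)" if "l \<in> labellings" for l
  proof -
    have "(\<Sum>f\<in>partitionings. (\<Prod>x\<in>E. s (l (fst x)) (l (snd x)) (f x)) * of_bool (f e = f e'))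
      = (\<Sum>p<n. \<Sum>q<n. s (l (fst e)) (l (snd e)) p * s (l (fst e')) (l (snd e')) q * of_bool (p = q))"
      using that assms(2,3) \<open>e \<noteq> e'\<close> finite_E
      by (intro sum_PiE_prod_weight_two_points) (auto simp: part_weights_sum edge_labels_less)
    also have "\<dots> = (\<Sum>p<n. s (l (fst e)) (l (snd e)) p * s (l (fst e')) (l (snd e')) p)"
      by (intro sum.cong refl) (simp add: of_bool_def if_distrib cong: if_cong)
    finally show ?thesis .
  qed
  have "expect (\<lambda>_ f. of_bool (f e = f e'))
      = (\<Sum>l\<in>labellings. (\<Prod>v\<in>V. w (l v)) *
          (\<Sum>p<n. s (l (fst e)) (l (snd e)) p * s (l (fst e')) (l (snd e')) p))"
    unfolding bisp_expectation_def by (intro sum.cong refl) (simp add: edge_marginal)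
  also have "\<dots> = (\<Sum>i<m. \<Sum>j<m. \<Sum>i'<m. \<Sum>j'<m. w i * w j * w i' * w j' * (\<Sum>p<n. s i j p * s i' j' p))"
    using assms(2,3) distinct edges finite_V
    by (intro sum_PiE_prod_weight_four_points) (auto simp: label_weights_sum)
  also have "\<dots> = (\<Sum>p<n. (\<Sum>i<m. \<Sum>j<m. w i * w j * s i j p)\<^sup>2)"
    by (rule sum_quadruple_weights_eq_sum_sq)
  also have "\<dots> = (\<Sum>p<n. (1 / real n)\<^sup>2)"
    using assms(1) by (simp add: is_balanced_def)
  also have "\<dots> = 1 / real n"
    using n_pos by (simp add: power2_eq_square)
  finally show ?thesis .
qed

lemma expect_same_part_le:
  assumes "is_balanced n m w s" "e \<in> E" "e' \<in> E"
  shows "expect (\<lambda>_ f. of_bool (f e = f e')) \<le> 1 / real n + of_bool (dependent_edges e e')"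
proof (cases "dependent_edges e e'")
  case False
  then show ?thesis
    using expect_same_part_if_not_dependent[OF assms] by simp
next
  case True
  have "expect (\<lambda>_ f. of_bool (f e = f e')) \<le> expect (\<lambda>_ _. 1)"
    by (intro expect_mono) simp
  also have "\<dots> \<le> 1 / real n + 1"
    by (simp add: expect_const)
  finally show ?thesis
    using True by simp
qed

lemma expect_sq_part_size_deviation_le:
  assumes "is_balanced n m w s"
  shows "expect (\<lambda>_ f. \<Sum>p<n. (real (card {e\<in>E. f e = p}) - real (card E) / real n)\<^sup>2)
       \<le> 6 * real (card V) * real (card E)"
proof -
  have "expect (\<lambda>_ f. \<Sum>p<n. (real (card {e\<in>E. f e = p}) - real (card E) / real n)\<^sup>2)
      = expect (\<lambda>_ f. (\<Sum>e\<in>E. \<Sum>e'\<in>E. of_bool (f e = f e')) - (real (card E))\<^sup>2 / real n)"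
    using finite_E n_pos by (intro expect_cong sum_sq_part_size_deviation) (auto simp: PiE_iff)
  also have "\<dots> = (\<Sum>e\<in>E. \<Sum>e'\<in>E. expect (\<lambda>_ f. of_bool (f e = f e'))) - (real (card E))\<^sup>2 / real n"
    by (simp add: expect_diff expect_sum expect_const del: sum_of_bool_eq)
  also have "\<dots> \<le> (\<Sum>e\<in>E. \<Sum>e'\<in>E. 1 / real n + of_bool (dependent_edges e e'))
      - (real (card E))\<^sup>2 / real n"
    using assms by (intro diff_right_mono sum_mono expect_same_part_le)
  also have "\<dots> = (\<Sum>e\<in>E. \<Sum>e'\<in>E. of_bool (dependent_edges e e'))"
    by (simp add: sum.distrib power2_eq_square del: sum_of_bool_eq)
  also have "\<dots> \<le> 6 * real (card V) * real (card E)"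
    using finite_V edges by (rule sum_dependent_edges_le)
  finally show ?thesis .
qed

lemma bisp_prob_imbalance_le_error_bound:
  assumes "is_balanced n m w s" "0 < card E" "0 < \<epsilon>"
  shows "\<bar>bisp_prob n m w s V E (\<lambda>f. imbalance n E f \<le> 1 + \<epsilon>) - 1\<bar>
       \<le> 6 * real (card V) * (real n)\<^sup>2 / (\<epsilon>\<^sup>2 * real (card E))"
proof -
  define c where "c = real (card E) / real n"
  define bad where "bad = expect (\<lambda>_ f. of_bool (1 + \<epsilon> < imbalance n E f))"
  have "0 < c"
    using assms(2) n_pos by (simp add: c_def)
  have "bisp_prob n m w s V E (\<lambda>f. imbalance n E f \<le> 1 + \<epsilon>)
      = expect (\<lambda>_ f. 1 - of_bool (1 + \<epsilon> < imbalance n E f))"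
    unfolding bisp_prob_eq_expectation by (rule arg_cong[where f = expect]) (auto simp: fun_eq_iff)
  then have prob: "bisp_prob n m w s V E (\<lambda>f. imbalance n E f \<le> 1 + \<epsilon>) = 1 - bad"
    by (simp add: bad_def expect_diff expect_const)
  have "0 \<le> bad"
    using expect_mono[of "\<lambda>_ _. 0"] by (simp add: bad_def expect_const)
  have dev: "(\<epsilon> * c)\<^sup>2 * of_bool (1 + \<epsilon> < imbalance n E f)
      \<le> (\<Sum>p<n. (real (card {e\<in>E. f e = p}) - real (card E) / real n)\<^sup>2)" for f
  proof (cases "1 + \<epsilon> < imbalance n E f")
    case True
    then show ?thesis
      using sq_deviation_ge_if_imbalance_gt[of \<epsilon> n E f] assms(3) by (simp add: c_def)
  next
    case False
    then show ?thesis
      by (simp add: sum_nonneg)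
  qed
  have "(\<epsilon> * c)\<^sup>2 * bad
      \<le> expect (\<lambda>_ f. \<Sum>p<n. (real (card {e\<in>E. f e = p}) - real (card E) / real n)\<^sup>2)"
    unfolding bad_def expect_scale[symmetric] by (intro expect_mono dev)
  also have "\<dots> \<le> 6 * real (card V) * real (card E)"
    using assms(1) by (rule expect_sq_part_size_deviation_le)
  finally have "bad \<le> 6 * real (card V) * real (card E) / (\<epsilon> * c)\<^sup>2"
    using \<open>0 < c\<close> assms(3) by (simp add: pos_le_divide_eq mult.commute)
  also have "\<dots> = 6 * real (card V) * (real n)\<^sup>2 / (\<epsilon>\<^sup>2 * real (card E))"
    using assms(2) n_pos by (simp add: c_def field_simps power2_eq_square)
  finally show ?thesis
    using prob \<open>0 \<le> bad\<close> by simp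
qed

end

lemma tendsto_sq_div_zero_if_smallo_sqrt:
  fixes f g :: "'a \<Rightarrow> real"
  assumes "f \<in> o[F](\<lambda>x. sqrt (g x))" and "\<And>x. 0 \<le> g x"
  shows "((\<lambda>x. (f x)\<^sup>2 / g x) \<longlongrightarrow> 0) F"
proof -
  have "(\<lambda>x. f x * f x) \<in> o[F](\<lambda>x. sqrt (g x) * sqrt (g x))"
    using landau_o.small_mult[OF assms(1) assms(1)] .
  then show ?thesis
    using assms(2) by (simp add: power2_eq_square smalloD_tendsto)
qed

theorem lemma1:
  fixes n m :: "nat \<Rightarrow> nat"
    and F :: "nat \<Rightarrow> nat \<Rightarrow> nat set"
    and w :: "nat \<Rightarrow> nat \<Rightarrow> real"
    and s :: "nat \<Rightarrow> nat \<Rightarrow> nat \<Rightarrow> nat \<Rightarrow> real"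
    and V :: "nat \<Rightarrow> 'v set"
    and E :: "nat \<Rightarrow> ('v \<times> 'v) set"
  assumes sys: "\<And>k. is_system (n k) (m k) (F k) (w k) (s k)"
    and bal: "\<And>k. is_balanced (n k) (m k) (w k) (s k)"
    and finV: "\<And>k. finite (V k)"
    and EV: "\<And>k. E k \<subseteq> V k \<times> V k"
    and Vinf: "filterlim (\<lambda>k. real (card (V k))) at_top sequentially"
    and dens: "filterlim (\<lambda>k. real (card (E k)) / real (card (V k))) at_top sequentially"
    and nsmall: "(\<lambda>k. real (n k)) \<in> o(\<lambda>k. sqrt (real (card (E k)) / real (card (V k))))"
  shows "\<forall>\<epsilon>>0. (\<lambda>k. bisp_prob (n k) (m k) (w k) (s k) (V k) (E k)
                 (\<lambda>f. imbalance (n k) (E k) f \<le> 1 + \<epsilon>)) \<longlonglongrightarrow> 1"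
proof (intro allI impI)
  fix \<epsilon> :: real
  assume "0 < \<epsilon>"
  let ?P = "\<lambda>k. bisp_prob (n k) (m k) (w k) (s k) (V k) (E k) (\<lambda>f. imbalance (n k) (E k) f \<le> 1 + \<epsilon>)"
  let ?D = "\<lambda>k. real (card (E k)) / real (card (V k))"
  have "(\<lambda>k. (real (n k))\<^sup>2 / ?D k) \<longlonglongrightarrow> 0"
    using nsmall by (rule tendsto_sq_div_zero_if_smallo_sqrt) simp
  then have bound_lim: "(\<lambda>k. 6 / \<epsilon>\<^sup>2 * ((real (n k))\<^sup>2 / ?D k)) \<longlonglongrightarrow> 0"
    by (rule tendsto_mult_right_zero)
  have "eventually (\<lambda>k. 0 < ?D k) sequentially"
    using dens by (simp add: filterlim_at_top_dense)
  then have "eventually (\<lambda>k. norm (?P k - 1) \<le> 6 / \<epsilon>\<^sup>2 * ((real (n k))\<^sup>2 / ?D k)) sequentially"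
  proof eventually_elim
    case (elim k)
    interpret bisp_system "n k" "m k" "F k" "w k" "s k" "V k" "E k"
      using sys finV EV by unfold_locales
    have "0 < card (E k)"
      using elim by (simp add: zero_less_divide_iff)
    then show ?case
      using bisp_prob_imbalance_le_error_bound[OF bal \<open>0 < card (E k)\<close> \<open>0 < \<epsilon>\<close>]
      by (simp add: field_simps)
  qed
  then have "(\<lambda>k. ?P k - 1) \<longlonglongrightarrow> 0"
    using bound_lim by (rule Lim_null_comparison)
  then show "?P \<longlonglongrightarrow> 1"
    by (simp add: LIM_zero_iff)
qed

end
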